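(* Let $X$ be a metrizable vector space over $K$ with metric $d_X$, and let $Y$ be a normed (respectively Banach) algebra over $K$ with $d_Y$ the metric induced by its norm. For maps $F_1,F_2:X\to Y$ define $(F_1*F_2)(x)=\frac{F_1(x)F_2(x)}{d_X(x,0)}$ for $x\neq0$ and $(F_1*F_2)(0)=F_1(0)F_2(0)$. Then $B_d(X,Y)$ with multiplication $*$ is a normed (respectively Banach) algebra with norm $\|F\|_{B_d(X,Y)}=d(F,0)$. If $Y$ is unital, then $B_d(X,Y)$ is unital.
   Context: $K$ is $\mathbb{R}$ or $\mathbb{C}$. For maps $F_1,F_2:X\to Y$, $d(F_1,F_2)=\max\left\{\sup_{x\neq0,x\in X}\frac{\|F_1(x)-F_2(x)\|_Y}{d_X(x,0)},\ \|F_1(0)-F_2(0)\|_Y\right\}\in[0,\infty]$, and $B_d(X,Y)$ is the set of maps $F:X\to Y$ with $d(F,0)<\infty$, with pointwise vector operations. A normed algebra has submultiplicative norm $\|ab\|\le\|a\|\|b\|$; a unital one has unit $1$ with $\|1\|=1$. *)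

theory Defs
  imports "HOL-Analysis.Analysis"
begin

definition R_or_C :: "'k::real_normed_field itself \<Rightarrow> bool" where
  "R_or_C _ \<longleftrightarrow>
     (\<exists>f::real \<Rightarrow> 'k. bij f \<and> (\<forall>x y. f (x + y) = f x + f y \<and> f (x * y) = f x * f y)
        \<and> (\<forall>x. norm (f x) = norm x)) \<or>
     (\<exists>f::complex \<Rightarrow> 'k. bij f \<and> (\<forall>x y. f (x + y) = f x + f y \<and> f (x * y) = f x * f y)
        \<and> (\<forall>x. norm (f x) = norm x))"

definition metric_vector_topology ::
  "('k::real_normed_field \<Rightarrow> 'a \<Rightarrow> 'a) \<Rightarrow> ('a::ab_group_add \<Rightarrow> 'a \<Rightarrow> real) \<Rightarrow> bool" where
  "metric_vector_topology sc dX \<longleftrightarrow>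
     (\<forall>xs ys x y. (\<lambda>n. dX (xs n) x) \<longlonglongrightarrow> 0 \<and> (\<lambda>n. dX (ys n) y) \<longlonglongrightarrow> 0
        \<longrightarrow> (\<lambda>n. dX (xs n + ys n) (x + y)) \<longlonglongrightarrow> 0) \<and>
     (\<forall>cs xs c x. cs \<longlonglongrightarrow> c \<and> (\<lambda>n. dX (xs n) x) \<longlonglongrightarrow> 0
        \<longrightarrow> (\<lambda>n. dX (sc (cs n) (xs n)) (sc c x)) \<longlonglongrightarrow> 0)"

definition normed_algebra_on ::
  "'c set \<Rightarrow> 'c \<Rightarrow> ('c \<Rightarrow> 'c \<Rightarrow> 'c) \<Rightarrow> ('k::real_normed_field \<Rightarrow> 'c \<Rightarrow> 'c)
     \<Rightarrow> ('c \<Rightarrow> 'c \<Rightarrow> 'c) \<Rightarrow> ('c \<Rightarrow> real) \<Rightarrow> bool" where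
  "normed_algebra_on S z ad sc mul nrm \<longleftrightarrow>
     \<comment> \<open>closure\<close>
     z \<in> S \<and>
     (\<forall>a\<in>S. \<forall>b\<in>S. ad a b \<in> S) \<and>
     (\<forall>c. \<forall>a\<in>S. sc c a \<in> S) \<and>
     (\<forall>a\<in>S. \<forall>b\<in>S. mul a b \<in> S) \<and>
     \<comment> \<open>vector space over K\<close>
     (\<forall>a\<in>S. \<forall>b\<in>S. \<forall>e\<in>S. ad (ad a b) e = ad a (ad b e)) \<and>
     (\<forall>a\<in>S. \<forall>b\<in>S. ad a b = ad b a) \<and>
     (\<forall>a\<in>S. ad z a = a) \<and>
     (\<forall>a\<in>S. \<exists>b\<in>S. ad a b = z) \<and>
     (\<forall>c. \<forall>a\<in>S. \<forall>b\<in>S. sc c (ad a b) = ad (sc c a) (sc c b)) \<and>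
     (\<forall>c c'. \<forall>a\<in>S. sc (c + c') a = ad (sc c a) (sc c' a)) \<and>
     (\<forall>c c'. \<forall>a\<in>S. sc c (sc c' a) = sc (c * c') a) \<and>
     (\<forall>a\<in>S. sc 1 a = a) \<and>
     \<comment> \<open>algebra over K\<close>
     (\<forall>a\<in>S. \<forall>b\<in>S. \<forall>e\<in>S. mul (mul a b) e = mul a (mul b e)) \<and>
     (\<forall>a\<in>S. \<forall>b\<in>S. \<forall>e\<in>S. mul a (ad b e) = ad (mul a b) (mul a e)) \<and>
     (\<forall>a\<in>S. \<forall>b\<in>S. \<forall>e\<in>S. mul (ad a b) e = ad (mul a e) (mul b e)) \<and>
     (\<forall>c. \<forall>a\<in>S. \<forall>b\<in>S. sc c (mul a b) = mul (sc c a) b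
                      \<and> sc c (mul a b) = mul a (sc c b)) \<and>
     \<comment> \<open>norm\<close>
     (\<forall>a\<in>S. nrm a = 0 \<longleftrightarrow> a = z) \<and>
     (\<forall>a\<in>S. 0 \<le> nrm a) \<and>
     (\<forall>a\<in>S. \<forall>b\<in>S. nrm (ad a b) \<le> nrm a + nrm b) \<and>
     (\<forall>c. \<forall>a\<in>S. nrm (sc c a) = norm c * nrm a) \<and>
     \<comment> \<open>submultiplicativity\<close>
     (\<forall>a\<in>S. \<forall>b\<in>S. nrm (mul a b) \<le> nrm a * nrm b)"

definition banach_algebra_on ::
  "'c set \<Rightarrow> 'c \<Rightarrow> ('c \<Rightarrow> 'c \<Rightarrow> 'c) \<Rightarrow> ('k::real_normed_field \<Rightarrow> 'c \<Rightarrow> 'c)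
     \<Rightarrow> ('c \<Rightarrow> 'c \<Rightarrow> 'c) \<Rightarrow> ('c \<Rightarrow> real) \<Rightarrow> bool" where
  "banach_algebra_on S z ad sc mul nrm \<longleftrightarrow>
     normed_algebra_on S z ad sc mul nrm \<and>
     (\<forall>f. (\<forall>n. f n \<in> S) \<and>
          (\<forall>e>0. \<exists>N. \<forall>m\<ge>N. \<forall>n\<ge>N. nrm (ad (f m) (sc (-1) (f n))) < e)
       \<longrightarrow> (\<exists>l\<in>S. (\<lambda>n. nrm (ad (f n) (sc (-1) l))) \<longlonglongrightarrow> 0))"

definition unital_on :: "'c set \<Rightarrow> ('c \<Rightarrow> 'c \<Rightarrow> 'c) \<Rightarrow> ('c \<Rightarrow> real) \<Rightarrow> bool" where
  "unital_on S mul nrm \<longleftrightarrow>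
     (\<exists>u\<in>S. nrm u = 1 \<and> (\<forall>a\<in>S. mul u a = a \<and> mul a u = a))"

definition dmap :: "('a::zero \<Rightarrow> 'a \<Rightarrow> real) \<Rightarrow> ('b::minus \<Rightarrow> real)
    \<Rightarrow> ('a \<Rightarrow> 'b) \<Rightarrow> ('a \<Rightarrow> 'b) \<Rightarrow> ereal" where
  "dmap dX nY F1 F2 =
     max (SUP x\<in>{x. x \<noteq> 0}. ereal (nY (F1 x - F2 x) / dX x 0))
         (ereal (nY (F1 0 - F2 0)))"

definition Bd :: "('a::zero \<Rightarrow> 'a \<Rightarrow> real) \<Rightarrow> ('b::{minus,zero} \<Rightarrow> real) \<Rightarrow> ('a \<Rightarrow> 'b) set" where
  "Bd dX nY = {F. dmap dX nY F (\<lambda>_. 0) < \<infinity>}"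

definition star :: "('k::real_normed_field \<Rightarrow> 'b \<Rightarrow> 'b) \<Rightarrow> ('a::zero \<Rightarrow> 'a \<Rightarrow> real)
    \<Rightarrow> ('a \<Rightarrow> 'b::times) \<Rightarrow> ('a \<Rightarrow> 'b) \<Rightarrow> ('a \<Rightarrow> 'b)" where
  "star scaleY dX F1 F2 = (\<lambda>x. if x = 0 then F1 0 * F2 0
        else scaleY (of_real (inverse (dX x 0))) (F1 x * F2 x))"

end

theory Submission
  imports Defs
begin

text \<open>With the weight w(0) = 1 and w(x) = d_X(x,0) for x \<noteq> 0, the distance d(F,0) is the
  supremum of \<parallel>F x\<parallel> / w x over all x, so B_d(X,Y) is a weighted sup-normed space of maps and
  (F * G)(x) = F(x) G(x) / w(x) at every point. Submultiplicativity follows from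
  \<parallel>F x G x\<parallel> / w x \<le> (\<parallel>F\<parallel> w x)(\<parallel>G\<parallel> w x) / w x; completeness is inherited pointwise from Y
  exactly as for bounded functions; if u is the unit of Y, then x \<mapsto> w(x) u is the unit of B_d(X,Y).\<close>

lemma SUP_ereal_less_PInfty_iff:
  fixes f :: "'a \<Rightarrow> real"
  shows "(SUP x\<in>A. ereal (f x)) < \<infinity> \<longleftrightarrow> bdd_above (f ` A)"
proof
  assume "(SUP x\<in>A. ereal (f x)) < \<infinity>"
  then obtain n :: nat where n: "(SUP x\<in>A. ereal (f x)) < ereal (real n)"
    by (auto simp: less_PInf_Ex_of_nat)
  have "f x \<le> real n" if "x \<in> A" for x
  proof -
    have "ereal (f x) \<le> (SUP x\<in>A. ereal (f x))"
      using that by (rule SUP_upper)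
    from order.strict_trans1[OF this n] show ?thesis by simp
  qed
  then show "bdd_above (f ` A)" by (rule bdd_aboveI2)
next
  assume "bdd_above (f ` A)"
  then obtain M where "\<And>x. x \<in> A \<Longrightarrow> f x \<le> M" by (auto simp: bdd_above_def)
  then have "(SUP x\<in>A. ereal (f x)) \<le> ereal M" by (simp add: SUP_least)
  also have "\<dots> < \<infinity>" by simp
  finally show "(SUP x\<in>A. ereal (f x)) < \<infinity>" .
qed

lemma real_of_ereal_SUP:
  fixes f :: "'a \<Rightarrow> real"
  assumes "A \<noteq> {}" "bdd_above (f ` A)"
  shows "real_of_ereal (SUP x\<in>A. ereal (f x)) = (SUP x\<in>A. f x)"
proof -
  obtain x where "x \<in> A" using assms(1) by blast
  then have "ereal (f x) \<le> (SUP x\<in>A. ereal (f x))" by (rule SUP_upper)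
  moreover have "(SUP x\<in>A. ereal (f x)) < \<infinity>"
    using assms(2) SUP_ereal_less_PInfty_iff by blast
  ultimately have "\<bar>SUP x\<in>A. ereal (f x)\<bar> \<noteq> \<infinity>"
    by (cases "SUP x\<in>A. ereal (f x)") auto
  then have "(SUP x\<in>A. ereal (f x)) = ereal (SUP x\<in>A. f x)"
    by (rule ereal_SUP[symmetric])
  then show ?thesis by simp
qed

definition weight :: "('a::zero \<Rightarrow> 'a \<Rightarrow> real) \<Rightarrow> 'a \<Rightarrow> real" where
  "weight dX x = (if x = 0 then 1 else dX x 0)"

lemma dmap_zero_eq_SUP:
  fixes nY :: "'b::group_add \<Rightarrow> real"
  shows "dmap dX nY F (\<lambda>_. 0) = (SUP x. ereal (nY (F x) / weight dX x))"
proof -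
  have "range (\<lambda>x. ereal (nY (F x) / weight dX x))
      = (\<lambda>x. ereal (nY (F x) / weight dX x)) ` insert 0 {x. x \<noteq> 0}"
    by blast
  also have "Sup \<dots> = sup (ereal (nY (F 0))) (SUP x\<in>{x. x \<noteq> 0}. ereal (nY (F x) / dX x 0))"
    unfolding SUP_insert by (simp add: weight_def)
  finally show ?thesis by (simp add: dmap_def sup_max max.commute)
qed

lemma Bd_iff_bdd_above:
  fixes nY :: "'b::group_add \<Rightarrow> real"
  shows "F \<in> Bd dX nY \<longleftrightarrow> bdd_above (range (\<lambda>x. nY (F x) / weight dX x))"
  unfolding Bd_def mem_Collect_eq dmap_zero_eq_SUP by (rule SUP_ereal_less_PInfty_iff)

locale maps_into_normed_algebra =
  fixes dX :: "'a::zero \<Rightarrow> 'a \<Rightarrow> real"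
    and scaleY :: "'k::real_normed_field \<Rightarrow> 'b::ring \<Rightarrow> 'b"
    and normY :: "'b \<Rightarrow> real"
  assumes X_metric: "Metric_space UNIV dX"
    and Y: "normed_algebra_on UNIV 0 (+) scaleY (*) normY"
begin

lemma normed_algebra_laws:
  "\<forall>c. \<forall>a\<in>UNIV. \<forall>b\<in>UNIV. scaleY c (a + b) = scaleY c a + scaleY c b"
  "\<forall>c c'. \<forall>a\<in>UNIV. scaleY (c + c') a = scaleY c a + scaleY c' a"
  "\<forall>c c'. \<forall>a\<in>UNIV. scaleY c (scaleY c' a) = scaleY (c * c') a"
  "\<forall>a\<in>UNIV. scaleY 1 a = a"
  "\<forall>c. \<forall>a\<in>UNIV. \<forall>b\<in>UNIV. scaleY c (a * b) = scaleY c a * b \<and> scaleY c (a * b) = a * scaleY c b"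
  "\<forall>a\<in>UNIV. normY a = 0 \<longleftrightarrow> a = 0"
  "\<forall>a\<in>UNIV. 0 \<le> normY a"
  "\<forall>a\<in>UNIV. \<forall>b\<in>UNIV. normY (a + b) \<le> normY a + normY b"
  "\<forall>c. \<forall>a\<in>UNIV. normY (scaleY c a) = norm c * normY a"
  "\<forall>a\<in>UNIV. \<forall>b\<in>UNIV. normY (a * b) \<le> normY a * normY b"
  by (insert Y[unfolded normed_algebra_on_def], (elim conjE; assumption)+)

lemma normY_eq_0_iff: "normY a = 0 \<longleftrightarrow> a = 0"
  and normY_nonneg: "0 \<le> normY a"
  and normY_add_le: "normY (a + b) \<le> normY a + normY b"
  and normY_scale: "normY (scaleY c a) = norm c * normY a"
  and normY_mult_le: "normY (a * b) \<le> normY a * normY b"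
  using normed_algebra_laws(6-10) by simp_all

lemma scale_mult_left: "scaleY c a * b = scaleY c (a * b)"
  and scale_mult_right: "a * scaleY c b = scaleY c (a * b)"
  using normed_algebra_laws(5)[rule_format, OF UNIV_I UNIV_I] by (metis conjunct1, metis conjunct2)

sublocale Y: vector_space scaleY
  using normed_algebra_laws(1-4) by unfold_locales simp_all

lemma normY_zero [simp]: "normY 0 = 0"
  by (simp add: normY_eq_0_iff)

lemma normY_diff_triangle: "normY (a - c) \<le> normY (a - b) + normY (b - c)"
  using normY_add_le[of "a - b" "b - c"] by simp

lemma normY_diff_le_of_tendsto:
  assumes "(\<lambda>m. normY (g m - l)) \<longlonglongrightarrow> 0" and "\<forall>\<^sub>F m in sequentially. normY (a - g m) \<le> c"
  shows "normY (a - l) \<le> c"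
proof (rule field_le_epsilon)
  fix e :: real assume "0 < e"
  with assms have "\<forall>\<^sub>F m in sequentially. normY (a - g m) \<le> c \<and> normY (g m - l) < e"
    by (auto intro: eventually_conj order_tendstoD(2))
  then obtain m where "normY (a - g m) \<le> c" "normY (g m - l) < e"
    using eventually_sequentially by auto
  then show "normY (a - l) \<le> c + e"
    using normY_diff_triangle[of a l "g m"] by linarith
qed

lemma weight_pos: "0 < weight dX x"
  using Metric_space.mdist_pos_less[OF X_metric] by (simp add: weight_def)

abbreviation bd_norm :: "('a \<Rightarrow> 'b) \<Rightarrow> real" where
  "bd_norm F \<equiv> real_of_ereal (dmap dX normY F (\<lambda>_. 0))"

lemma bd_norm_eq_SUP:
  "F \<in> Bd dX normY \<Longrightarrow> bd_norm F = (SUP x. normY (F x) / weight dX x)"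
  by (simp add: dmap_zero_eq_SUP Bd_iff_bdd_above real_of_ereal_SUP)

lemma normY_le_bd_norm:
  assumes "F \<in> Bd dX normY"
  shows "normY (F x) \<le> bd_norm F * weight dX x"
proof -
  have "normY (F x) / weight dX x \<le> bd_norm F"
    using assms by (auto simp: bd_norm_eq_SUP Bd_iff_bdd_above intro: cSUP_upper)
  then show ?thesis using weight_pos by (simp add: pos_divide_le_eq)
qed

lemma bd_norm_nonneg: "F \<in> Bd dX normY \<Longrightarrow> 0 \<le> bd_norm F"
  using normY_le_bd_norm[of F 0] normY_nonneg[of "F 0"] by (simp add: weight_def)

lemma Bd_and_bd_norm_le:
  assumes "\<And>x. normY (F x) \<le> M * weight dX x"
  shows "F \<in> Bd dX normY" and "bd_norm F \<le> M"
proof -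
  have bound: "normY (F x) / weight dX x \<le> M" for x
    using assms[of x] weight_pos[of x] by (simp add: pos_divide_le_eq)
  then show F: "F \<in> Bd dX normY"
    unfolding Bd_iff_bdd_above by (rule bdd_aboveI2)
  show "bd_norm F \<le> M"
    using bound by (simp add: bd_norm_eq_SUP[OF F] cSUP_least)
qed

lemma star_eq_weight:
  "star scaleY dX F G x = scaleY (of_real (inverse (weight dX x))) (F x * G x)"
  by (simp add: star_def weight_def)

lemma Bd_zero: "(\<lambda>_. 0) \<in> Bd dX normY"
  and bd_norm_zero: "bd_norm (\<lambda>_. 0) = 0"
proof -
  have zero_bound: "normY 0 \<le> 0 * weight dX x" for x by simp
  show Z: "(\<lambda>_. 0) \<in> Bd dX normY"
    using zero_bound by (rule Bd_and_bd_norm_le(1))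
  show "bd_norm (\<lambda>_. 0) = 0"
    using Bd_and_bd_norm_le(2)[OF zero_bound] bd_norm_nonneg[OF Z] by linarith
qed

lemma bd_norm_eq_0_iff:
  assumes F: "F \<in> Bd dX normY"
  shows "bd_norm F = 0 \<longleftrightarrow> F = (\<lambda>_. 0)"
proof
  assume "bd_norm F = 0"
  then have "normY (F x) \<le> 0" for x
    using normY_le_bd_norm[OF F, of x] by simp
  then show "F = (\<lambda>_. 0)"
    using normY_nonneg normY_eq_0_iff by (metis antisym)
qed (simp add: bd_norm_zero)

lemma Bd_add: "F \<in> Bd dX normY \<Longrightarrow> G \<in> Bd dX normY \<Longrightarrow> (\<lambda>x. F x + G x) \<in> Bd dX normY"
  and bd_norm_add_le: "F \<in> Bd dX normY \<Longrightarrow> G \<in> Bd dX normY \<Longrightarrow>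
    bd_norm (\<lambda>x. F x + G x) \<le> bd_norm F + bd_norm G"
proof -
  assume "F \<in> Bd dX normY" "G \<in> Bd dX normY"
  then have "normY (F x + G x) \<le> (bd_norm F + bd_norm G) * weight dX x" for x
    using normY_add_le[of "F x" "G x"] normY_le_bd_norm[of F x] normY_le_bd_norm[of G x]
    by (simp add: distrib_right)
  then show "(\<lambda>x. F x + G x) \<in> Bd dX normY" "bd_norm (\<lambda>x. F x + G x) \<le> bd_norm F + bd_norm G"
    by (rule Bd_and_bd_norm_le)+
qed

lemma Bd_scale: "F \<in> Bd dX normY \<Longrightarrow> (\<lambda>x. scaleY c (F x)) \<in> Bd dX normY"
  and bd_norm_scale_le: "F \<in> Bd dX normY \<Longrightarrow> bd_norm (\<lambda>x. scaleY c (F x)) \<le> norm c * bd_norm F"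
proof -
  assume "F \<in> Bd dX normY"
  then have "normY (scaleY c (F x)) \<le> (norm c * bd_norm F) * weight dX x" for x
    using normY_le_bd_norm[of F x] by (simp add: normY_scale mult.assoc mult_left_mono)
  then show "(\<lambda>x. scaleY c (F x)) \<in> Bd dX normY" "bd_norm (\<lambda>x. scaleY c (F x)) \<le> norm c * bd_norm F"
    by (rule Bd_and_bd_norm_le)+
qed

lemma bd_norm_scale:
  assumes F: "F \<in> Bd dX normY"
  shows "bd_norm (\<lambda>x. scaleY c (F x)) = norm c * bd_norm F"
proof (cases "c = 0")
  case True
  then show ?thesis by (simp add: bd_norm_zero)
next
  case False
  have "bd_norm F = bd_norm (\<lambda>x. scaleY (inverse c) (scaleY c (F x)))"
    using False by simp
  also have "\<dots> \<le> norm (inverse c) * bd_norm (\<lambda>x. scaleY c (F x))"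
    by (rule bd_norm_scale_le[OF Bd_scale[OF F]])
  finally have "norm c * bd_norm F \<le> norm c * (norm (inverse c) * bd_norm (\<lambda>x. scaleY c (F x)))"
    by (rule mult_left_mono) simp
  also have "\<dots> = bd_norm (\<lambda>x. scaleY c (F x))"
    using False by (simp add: norm_inverse)
  finally have "norm c * bd_norm F \<le> bd_norm (\<lambda>x. scaleY c (F x))" .
  then show ?thesis using bd_norm_scale_le[OF F, of c] by linarith
qed

lemma Bd_uminus: "F \<in> Bd dX normY \<Longrightarrow> (\<lambda>x. - F x) \<in> Bd dX normY"
  using Bd_scale[of F "-1"] by simp

lemma Bd_diff: "F \<in> Bd dX normY \<Longrightarrow> G \<in> Bd dX normY \<Longrightarrow> (\<lambda>x. F x - G x) \<in> Bd dX normY"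
  using Bd_add[OF _ Bd_uminus, of F G] by simp

lemma Bd_star: "F \<in> Bd dX normY \<Longrightarrow> G \<in> Bd dX normY \<Longrightarrow> star scaleY dX F G \<in> Bd dX normY"
  and bd_norm_star_le: "F \<in> Bd dX normY \<Longrightarrow> G \<in> Bd dX normY \<Longrightarrow>
    bd_norm (star scaleY dX F G) \<le> bd_norm F * bd_norm G"
proof -
  assume F: "F \<in> Bd dX normY" and G: "G \<in> Bd dX normY"
  have "normY (star scaleY dX F G x) \<le> (bd_norm F * bd_norm G) * weight dX x" for x
  proof -
    have w: "0 < weight dX x" by (rule weight_pos)
    have "normY (F x * G x) \<le> normY (F x) * normY (G x)"
      by (rule normY_mult_le)
    also have "\<dots> \<le> (bd_norm F * weight dX x) * (bd_norm G * weight dX x)"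
      using normY_le_bd_norm[OF F, of x] normY_le_bd_norm[OF G, of x] normY_nonneg[of "G x"]
        bd_norm_nonneg[OF F] w by (intro mult_mono) simp_all
    finally have "normY (F x * G x) \<le> (bd_norm F * weight dX x) * (bd_norm G * weight dX x)" .
    then have "inverse (weight dX x) * normY (F x * G x) \<le> (bd_norm F * bd_norm G) * weight dX x"
      using w by (simp add: field_simps)
    then show ?thesis
      using w by (simp add: star_eq_weight normY_scale norm_inverse)
  qed
  then show "star scaleY dX F G \<in> Bd dX normY" "bd_norm (star scaleY dX F G) \<le> bd_norm F * bd_norm G"
    by (rule Bd_and_bd_norm_le)+
qed

theorem Bd_normed_algebra:
  "normed_algebra_on (Bd dX normY) (\<lambda>_. 0) (\<lambda>F G x. F x + G x) (\<lambda>c F x. scaleY c (F x))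
     (star scaleY dX) bd_norm"
  unfolding normed_algebra_on_def
proof (intro conjI)
  show "\<forall>F\<in>Bd dX normY. \<exists>G\<in>Bd dX normY. (\<lambda>x. F x + G x) = (\<lambda>_. 0)"
  proof
    fix F assume "F \<in> Bd dX normY"
    then show "\<exists>G\<in>Bd dX normY. (\<lambda>x. F x + G x) = (\<lambda>_. 0)"
      by (intro bexI[of _ "\<lambda>x. - F x"] Bd_uminus) simp_all
  qed
qed (simp_all add: Bd_zero Bd_add Bd_scale Bd_star bd_norm_eq_0_iff bd_norm_nonneg
      bd_norm_add_le bd_norm_scale bd_norm_star_le fun_eq_iff star_eq_weight
      scale_mult_left scale_mult_right algebra_simps)

lemma normY_diff_le_bd_norm:
  "F \<in> Bd dX normY \<Longrightarrow> G \<in> Bd dX normY \<Longrightarrow>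
    normY (F x - G x) \<le> bd_norm (\<lambda>x. F x - G x) * weight dX x"
  by (rule normY_le_bd_norm[OF Bd_diff])

lemma Bd_Cauchy_pointwise_limit:
  assumes Y_complete: "\<And>g. (\<forall>e>0. \<exists>N. \<forall>m\<ge>N. \<forall>n\<ge>N. normY (g m - g n) < e) \<Longrightarrow>
      \<exists>l. (\<lambda>n. normY (g n - l)) \<longlonglongrightarrow> 0"
    and f: "\<And>n. f n \<in> Bd dX normY"
    and Cauchy: "\<forall>e>0. \<exists>N. \<forall>m\<ge>N. \<forall>n\<ge>N. bd_norm (\<lambda>x. f m x - f n x) < e"
  obtains L where "\<And>x. (\<lambda>n. normY (f n x - L x)) \<longlonglongrightarrow> 0"
proof -
  have "\<exists>l. (\<lambda>n. normY (f n x - l)) \<longlonglongrightarrow> 0" for x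
  proof (rule Y_complete, intro allI impI)
    fix e :: real assume "0 < e"
    then obtain N where N: "\<forall>m\<ge>N. \<forall>n\<ge>N. bd_norm (\<lambda>x. f m x - f n x) < e / weight dX x"
      using Cauchy weight_pos[of x] by (meson divide_pos_pos)
    have "normY (f m x - f n x) < e" if "m \<ge> N" "n \<ge> N" for m n
    proof -
      have "normY (f m x - f n x) \<le> bd_norm (\<lambda>x. f m x - f n x) * weight dX x"
        by (rule normY_diff_le_bd_norm[OF f f])
      also have "\<dots> < e"
        using N that weight_pos[of x] by (simp add: pos_less_divide_eq)
      finally show ?thesis .
    qed
    then show "\<exists>N. \<forall>m\<ge>N. \<forall>n\<ge>N. normY (f m x - f n x) < e" by blast
  qed
  then show thesis using that by metis
qed

lemma Bd_Cauchy_tail_bound: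
  assumes f: "\<And>n. f n \<in> Bd dX normY"
    and L: "\<And>x. (\<lambda>n. normY (f n x - L x)) \<longlonglongrightarrow> 0"
    and N: "\<forall>m\<ge>N. \<forall>n\<ge>N. bd_norm (\<lambda>x. f m x - f n x) < e" and "n \<ge> N"
  shows "(\<lambda>x. f n x - L x) \<in> Bd dX normY" and "bd_norm (\<lambda>x. f n x - L x) \<le> e"
proof -
  have "normY (f n x - L x) \<le> e * weight dX x" for x
  proof (rule normY_diff_le_of_tendsto[OF L])
    show "\<forall>\<^sub>F m in sequentially. normY (f n x - f m x) \<le> e * weight dX x"
    proof (rule eventually_sequentiallyI)
      fix m assume "N \<le> m"
      then have "bd_norm (\<lambda>x. f n x - f m x) \<le> e"
        using N \<open>n \<ge> N\<close> by (simp add: less_imp_le)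
      then show "normY (f n x - f m x) \<le> e * weight dX x"
        using normY_diff_le_bd_norm[OF f[of n] f[of m], of x] weight_pos[of x]
        by (meson mult_right_mono less_imp_le order_trans)
    qed
  qed
  then show "(\<lambda>x. f n x - L x) \<in> Bd dX normY" "bd_norm (\<lambda>x. f n x - L x) \<le> e"
    by (rule Bd_and_bd_norm_le)+
qed

theorem Bd_banach_algebra:
  assumes "banach_algebra_on UNIV 0 (+) scaleY (*) normY"
  shows "banach_algebra_on (Bd dX normY) (\<lambda>_. 0) (\<lambda>F G x. F x + G x) (\<lambda>c F x. scaleY c (F x))
     (star scaleY dX) bd_norm"
  unfolding banach_algebra_on_def
proof (intro conjI Bd_normed_algebra allI impI)
  have Y_complete: "\<And>g. (\<forall>e>0. \<exists>N. \<forall>m\<ge>N. \<forall>n\<ge>N. normY (g m - g n) < e) \<Longrightarrow>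
      \<exists>l. (\<lambda>n. normY (g n - l)) \<longlonglongrightarrow> 0"
    using assms unfolding banach_algebra_on_def by simp
  fix f :: "nat \<Rightarrow> 'a \<Rightarrow> 'b"
  assume "(\<forall>n. f n \<in> Bd dX normY) \<and>
    (\<forall>e>0. \<exists>N. \<forall>m\<ge>N. \<forall>n\<ge>N. bd_norm (\<lambda>x. f m x + scaleY (- 1) (f n x)) < e)"
  then have f: "\<And>n. f n \<in> Bd dX normY"
    and Cauchy: "\<forall>e>0. \<exists>N. \<forall>m\<ge>N. \<forall>n\<ge>N. bd_norm (\<lambda>x. f m x - f n x) < e"
    by simp_all
  obtain L where L: "\<And>x. (\<lambda>n. normY (f n x - L x)) \<longlonglongrightarrow> 0"
    using Bd_Cauchy_pointwise_limit[OF Y_complete f Cauchy] by blast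
  have tail: "\<exists>N. \<forall>n\<ge>N. (\<lambda>x. f n x - L x) \<in> Bd dX normY \<and> bd_norm (\<lambda>x. f n x - L x) \<le> e"
    if "0 < e" for e
    using Cauchy that Bd_Cauchy_tail_bound[OF f L] by meson
  then obtain N where "(\<lambda>x. f N x - L x) \<in> Bd dX normY"
    by (meson order_refl zero_less_one)
  from Bd_diff[OF f[of N] this] have "L \<in> Bd dX normY" by simp
  moreover have "(\<lambda>n. bd_norm (\<lambda>x. f n x - L x)) \<longlonglongrightarrow> 0"
  proof (rule LIMSEQ_I)
    fix r :: real assume "0 < r"
    then obtain N where N: "\<forall>n\<ge>N. (\<lambda>x. f n x - L x) \<in> Bd dX normY \<and> bd_norm (\<lambda>x. f n x - L x) \<le> r / 2"
      using tail[of "r / 2"] by auto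
    have "norm (bd_norm (\<lambda>x. f n x - L x) - 0) < r" if "n \<ge> N" for n
    proof -
      have "0 \<le> bd_norm (\<lambda>x. f n x - L x)" "bd_norm (\<lambda>x. f n x - L x) \<le> r / 2"
        using N that bd_norm_nonneg by blast+
      then show ?thesis using \<open>0 < r\<close> by (simp only: real_norm_def diff_zero)
    qed
    then show "\<exists>N. \<forall>n\<ge>N. norm (bd_norm (\<lambda>x. f n x - L x) - 0) < r" by blast
  qed
  ultimately show "\<exists>L\<in>Bd dX normY. (\<lambda>n. bd_norm (\<lambda>x. f n x + scaleY (- 1) (L x))) \<longlonglongrightarrow> 0"
    by auto
qed

theorem Bd_unital:
  assumes "unital_on UNIV (*) normY"
  shows "unital_on (Bd dX normY) (star scaleY dX) bd_norm"
proof -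
  obtain u where u: "normY u = 1" "\<And>a. u * a = a" "\<And>a. a * u = a"
    using assms unfolding unital_on_def by blast
  define U where "U x = scaleY (of_real (weight dX x)) u" for x
  have "normY (U x) \<le> 1 * weight dX x" for x
    using weight_pos[of x] u(1) by (simp add: U_def normY_scale)
  then have U: "U \<in> Bd dX normY" and "bd_norm U \<le> 1"
    by (rule Bd_and_bd_norm_le)+
  moreover have "1 \<le> bd_norm U"
    using normY_le_bd_norm[OF U, of 0] u(1) by (simp add: U_def weight_def)
  moreover have "star scaleY dX U F = F \<and> star scaleY dX F U = F" for F
  proof -
    have "(of_real (weight dX x) :: 'k) \<noteq> 0" for x
      using weight_pos[of x] by simp
    then show ?thesis
      by (simp add: fun_eq_iff star_eq_weight U_def scale_mult_left scale_mult_right u)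
  qed
  ultimately show ?thesis
    unfolding unital_on_def by (intro bexI[of _ U]) auto
qed

end

theorem corollary12:
  fixes scaleX :: "'k::real_normed_field \<Rightarrow> 'a::ab_group_add \<Rightarrow> 'a"
    and dX :: "'a \<Rightarrow> 'a \<Rightarrow> real"
    and scaleY :: "'k \<Rightarrow> 'b::ring \<Rightarrow> 'b"
    and normY :: "'b \<Rightarrow> real"
  assumes K: "R_or_C TYPE('k)"
    and X_vs: "vector_space scaleX"
    and X_metric: "Metric_space UNIV dX"
    and X_tvs: "metric_vector_topology scaleX dX"
    and Y: "normed_algebra_on UNIV 0 (+) scaleY (*) normY"
  shows "normed_algebra_on (Bd dX normY) (\<lambda>_. 0) (\<lambda>F G x. F x + G x)
           (\<lambda>c F x. scaleY c (F x)) (star scaleY dX) (\<lambda>F. real_of_ereal (dmap dX normY F (\<lambda>_. 0)))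
       \<and> (banach_algebra_on UNIV 0 (+) scaleY (*) normY \<longrightarrow>
          banach_algebra_on (Bd dX normY) (\<lambda>_. 0) (\<lambda>F G x. F x + G x)
           (\<lambda>c F x. scaleY c (F x)) (star scaleY dX) (\<lambda>F. real_of_ereal (dmap dX normY F (\<lambda>_. 0))))
       \<and> (unital_on UNIV (*) normY \<longrightarrow>
          unital_on (Bd dX normY) (star scaleY dX) (\<lambda>F. real_of_ereal (dmap dX normY F (\<lambda>_. 0))))"
proof -
  interpret maps_into_normed_algebra dX scaleY normY
    using X_metric Y by (rule maps_into_normed_algebra.intro)
  show ?thesis
    using Bd_normed_algebra Bd_banach_algebra Bd_unital by blast
qed

end
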